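(* For every integer $n>1$, $$E_n=\sum_{N=1}^{\lfloor n/2\rfloor}(-1)^N\sum_{\substack{1\le q_1,\dots,q_{2N-1}\le\lfloor n/2\rfloor\\ (2q_1-1)+\cdots+(2q_{2N-1}-1)=n-1}}\frac{(n-1)!}{(2q_1-1)!\cdots(2q_{2N-1}-1)!}.$$
   Context: The Euler numbers $E_n$ are defined by $\sum_{n\ge0}E_nz^n/n!=1/\cosh z$ (so $E_n=0$ for odd $n$). The inner sum is over ordered $(2N-1)$-tuples. *)

theory Defs
  imports "HOL-Computational_Algebra.Formal_Power_Series"
begin

definition fps_cosh :: "real fps" where
  "fps_cosh = (fps_exp 1 + fps_exp (-1)) / 2"

definition euler_number :: "nat \<Rightarrow> real" where
  "euler_number n = fact n * fps_nth (inverse fps_cosh) n"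

end

theory Submission
  imports Defs
begin

text \<open>
  Differentiating, E(n) = (n-1)! [z^(n-1)] (1/cosh)'. Since cosh' = sinh and
  cosh^2 = 1 + sinh^2, we get (1/cosh)' = - sinh / (1 + sinh^2), which is the
  geometric series \<Sum>N\<ge>1. (-1)^N sinh^(2N-1). As sinh^(2N-1) has order 2N-1, only
  N \<le> n/2 contributes to the coefficient of z^(n-1); multiplying out the power of
  sinh z = \<Sum>q\<ge>1. z^(2q-1) / (2q-1)! turns that coefficient into the sum over
  ordered tuples of odd parts.
\<close>

unbundle fps_syntax

lemma fps_power_nth_eq_if_nth_eq:
  fixes f g :: "'a::comm_semiring_1 fps"
  assumes "\<And>i. i \<le> M \<Longrightarrow> f $ i = g $ i" and "m \<le> M"
  shows "(f ^ k) $ m = (g ^ k) $ m"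
  using assms(2)
proof (induction k arbitrary: m)
  case 0
  then show ?case by simp
next
  case (Suc k)
  have "(f ^ Suc k) $ m = (\<Sum>j=0..m. f $ j * (f ^ k) $ (m - j))"
    by (simp add: fps_mult_nth)
  also have "\<dots> = (\<Sum>j=0..m. g $ j * (g ^ k) $ (m - j))"
    using Suc assms(1) by (intro sum.cong) auto
  also have "\<dots> = (g ^ Suc k) $ m"
    by (simp add: fps_mult_nth)
  finally show ?case .
qed

lemma fps_const_prod:
  fixes f :: "'b \<Rightarrow> 'a::comm_semiring_1"
  shows "fps_const (\<Prod>i\<in>A. f i) = (\<Prod>i\<in>A. fps_const (f i))"
  by (induction A rule: infinite_finite_induct) (simp_all flip: fps_const_mult)

lemma fps_power_monomial_sum_nth:
  fixes c :: "'b \<Rightarrow> 'a::comm_semiring_1"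
  assumes "finite A"
  shows "((\<Sum>a\<in>A. fps_const (c a) * fps_X ^ e a) ^ k) $ m =
    (\<Sum>q \<in> {q \<in> {0..<k} \<rightarrow>\<^sub>E A. (\<Sum>i<k. e (q i)) = m}. \<Prod>i<k. c (q i))"
proof -
  have "(\<Sum>a\<in>A. fps_const (c a) * fps_X ^ e a) ^ k =
      (\<Prod>i\<in>{0..<k}. \<Sum>a\<in>A. fps_const (c a) * fps_X ^ e a)"
    by simp
  also have "\<dots> = (\<Sum>q\<in>{0..<k} \<rightarrow>\<^sub>E A. \<Prod>i\<in>{0..<k}. fps_const (c (q i)) * fps_X ^ e (q i))"
    using assms by (rule prod_sum_PiE[OF finite_atLeastLessThan])
  also have "\<dots> = (\<Sum>q\<in>{0..<k} \<rightarrow>\<^sub>E A. fps_const (\<Prod>i<k. c (q i)) * fps_X ^ (\<Sum>i<k. e (q i)))"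
    by (simp add: prod.distrib fps_const_prod power_sum atLeast0LessThan)
  finally have "((\<Sum>a\<in>A. fps_const (c a) * fps_X ^ e a) ^ k) $ m =
      (\<Sum>q\<in>{0..<k} \<rightarrow>\<^sub>E A. if (\<Sum>i<k. e (q i)) = m then \<Prod>i<k. c (q i) else 0)"
    by (simp add: fps_sum_nth) (intro sum.cong refl; simp)
  also have "\<dots> = (\<Sum>q \<in> {q \<in> {0..<k} \<rightarrow>\<^sub>E A. (\<Sum>i<k. e (q i)) = m}. \<Prod>i<k. c (q i))"
    using assms by (intro sum.inter_filter[symmetric] finite_PiE) auto
  finally show ?thesis .
qed

lemma fps_power_mult_nth_eq_0:
  fixes f g :: "'a::comm_ring_1 fps"
  assumes "f $ 0 = 0" and "m < k"
  shows "(f ^ k * g) $ m = 0"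
  using assms startsby_zero_power_prefix[of f k] by (simp add: fps_mult_nth)

lemma fps_neg_one_power_mult_nth:
  fixes f :: "'a::comm_ring_1 fps"
  shows "((-1) ^ k * f) $ m = (-1) ^ k * f $ m"
  by (cases "even k") auto

lemma times_neg_square_power:
  fixes x :: "'a::comm_ring_1"
  shows "x * (- (x ^ 2)) ^ k = (-1) ^ k * x ^ (2 * k + 1)"
proof -
  have "(- (x ^ 2)) ^ k = (-1) ^ k * x ^ (2 * k)"
    by (simp only: power_minus[of "x ^ 2"] power_mult)
  then show ?thesis
    by (simp add: mult.left_commute)
qed

lemma geometric_expansion_remainder:
  fixes x g :: "'a::comm_ring_1"
  assumes "(1 - x) * g = 1"
  shows "g = (\<Sum>k<K. x ^ k) + x ^ K * g"
proof -
  have "g = (1 - x ^ K) * g + x ^ K * g"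
    by (simp add: algebra_simps)
  also have "(1 - x ^ K) * g = (\<Sum>k<K. x ^ k) * ((1 - x) * g)"
    by (simp add: one_diff_power_eq algebra_simps)
  finally show ?thesis
    using assms by simp
qed

definition fps_sinh :: "real fps" where
  "fps_sinh = (fps_exp 1 - fps_exp (-1)) / 2"

lemma fps_divide_two: "f / 2 = fps_const (1 / 2) * (f :: real fps)"
  by (simp add: fps_divide_unit inverse_fps_numeral mult.commute)

lemma fps_cosh_nth: "fps_cosh $ i = (if even i then 1 / fact i else 0)"
  by (auto simp: fps_cosh_def fps_divide_two power_minus' field_simps)

lemma fps_sinh_nth: "fps_sinh $ i = (if odd i then 1 / fact i else 0)"
  by (auto simp: fps_sinh_def fps_divide_two power_minus' field_simps)

lemma fps_deriv_cosh: "fps_deriv fps_cosh = fps_sinh"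
  by (rule fps_ext) (simp add: fps_cosh_nth fps_sinh_nth)

lemma fps_cosh_square: "fps_cosh ^ 2 = 1 + fps_sinh ^ 2"
proof -
  have "fps_exp (1::real) * fps_exp (-1) = 1"
    by (simp flip: fps_exp_add_mult)
  then show ?thesis
    unfolding fps_cosh_def fps_sinh_def
    by (simp add: fps_divide_two power2_eq_square algebra_simps numeral_fps_const)
qed

lemma fps_deriv_inverse_cosh:
  "fps_deriv (inverse fps_cosh) = - fps_sinh * inverse (1 + fps_sinh ^ 2)"
proof -
  have "fps_cosh $ 0 \<noteq> 0"
    by (simp add: fps_cosh_nth)
  then show ?thesis
    by (simp add: fps_inverse_deriv fps_deriv_cosh fps_cosh_square flip: fps_inverse_power)
qed

text \<open>Up to order 2B, sinh agrees with its Taylor polynomial of degree 2B-1, hence so do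
  its powers; this is why the parts may be bounded by n div 2.\<close>

lemma fps_sinh_nth_eq_partial_sum:
  assumes "i \<le> 2 * B"
  shows "fps_sinh $ i = (\<Sum>a = 1..B. fps_const (1 / fact (2 * a - 1)) * fps_X ^ (2 * a - 1)) $ i"
proof (cases "odd i")
  case True
  then obtain j where j: "i = 2 * j + 1"
    by (auto elim: oddE)
  have "(\<Sum>a = 1..B. fps_const (1 / fact (2 * a - 1)) * fps_X ^ (2 * a - 1)) $ i
      = (\<Sum>a = 1..B. if a = j + 1 then 1 / fact i else (0::real))"
    unfolding fps_sum_nth by (intro sum.cong refl) (auto simp: j)
  also have "\<dots> = 1 / fact i"
    using assms j by simp
  finally show ?thesis
    using True by (simp add: fps_sinh_nth)
next
  case False
  then show ?thesis
    by (auto simp: fps_sinh_nth fps_sum_nth intro!: sum.neutral)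
qed

lemma fps_sinh_power_nth:
  assumes "m \<le> 2 * B"
  shows "(fps_sinh ^ k) $ m =
    (\<Sum>q \<in> {q \<in> {0..<k} \<rightarrow>\<^sub>E {1..B}. (\<Sum>i<k. 2 * q i - 1) = m}.
       \<Prod>i<k. 1 / fact (2 * q i - 1))"
  using fps_power_nth_eq_if_nth_eq[OF fps_sinh_nth_eq_partial_sum assms]
  by (simp add: fps_power_monomial_sum_nth)

lemma fps_deriv_inverse_cosh_nth:
  assumes "m \<le> 2 * K"
  shows "fps_deriv (inverse fps_cosh) $ m = (\<Sum>N = 1..K. (-1) ^ N * (fps_sinh ^ (2 * N - 1)) $ m)"
proof -
  define S where "S = fps_sinh"
  define G where "G = inverse (1 + S ^ 2)"
  have S0: "S $ 0 = 0"
    by (simp add: S_def fps_sinh_nth)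
  have "(1 - - (S ^ 2)) * G = 1"
    unfolding G_def by (simp add: inverse_mult_eq_1' S0 power2_eq_square)
  from arg_cong[OF geometric_expansion_remainder[OF this, of K], of "times S"]
  have "S * G = (\<Sum>k<K. S * (- (S ^ 2)) ^ k) + S * (- (S ^ 2)) ^ K * G"
    by (simp only: distrib_left sum_distrib_left mult.assoc)
  also have "\<dots> = (\<Sum>k<K. (-1) ^ k * S ^ (2 * k + 1)) + (-1) ^ K * (S ^ (2 * K + 1) * G)"
    by (simp only: times_neg_square_power mult.assoc)
  \<comment> \<open>the remainder term has order \<open>2K + 1 > m\<close>\<close>
  finally have coeff: "(S * G) $ m = (\<Sum>k<K. (-1) ^ k * (S ^ (2 * k + 1)) $ m)"
    using fps_power_mult_nth_eq_0[OF S0, of m "2 * K + 1" G] assms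
    by (simp only: fps_add_nth fps_sum_nth fps_neg_one_power_mult_nth)
  have "fps_deriv (inverse fps_cosh) $ m = - (S * G) $ m"
    by (simp add: fps_deriv_inverse_cosh S_def G_def)
  also have "\<dots> = (\<Sum>k<K. (-1) ^ Suc k * (S ^ (2 * k + 1)) $ m)"
    by (simp add: coeff sum_negf)
  also have "\<dots> = (\<Sum>N = 1..K. (-1) ^ N * (S ^ (2 * N - 1)) $ m)"
    by (simp add: sum.atLeast1_atMost_eq)
  finally show ?thesis
    by (simp only: S_def)
qed

theorem proposition1:
  fixes n :: nat
  assumes "n > 1"
  shows "euler_number n =
    (\<Sum>N = 1..n div 2. (-1) ^ N *
       (\<Sum>q \<in> {q \<in> {0..<2*N-1} \<rightarrow>\<^sub>E {1..n div 2}.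
                   (\<Sum>i<2*N-1. 2 * q i - 1) = n - 1}.
          fact (n - 1) / (\<Prod>i<2*N-1. fact (2 * q i - 1))))"
proof -
  define m where "m = n - 1"
  have n: "n = Suc m" and m: "m \<le> 2 * (n div 2)"
    using assms by (simp_all add: m_def)
  have "euler_number n = fact m * fps_deriv (inverse fps_cosh) $ m"
    by (simp add: euler_number_def n)
  also have "\<dots> = fact m * (\<Sum>N = 1..n div 2. (-1) ^ N *
       (\<Sum>q \<in> {q \<in> {0..<2*N-1} \<rightarrow>\<^sub>E {1..n div 2}. (\<Sum>i<2*N-1. 2 * q i - 1) = m}.
          \<Prod>i<2*N-1. 1 / fact (2 * q i - 1)))"
    by (subst fps_deriv_inverse_cosh_nth[OF m]) (simp add: fps_sinh_power_nth[OF m])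
  finally show ?thesis
    by (simp add: m_def sum_distrib_left prod_dividef algebra_simps)
qed

end
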